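(* Let $\varepsilon\in(0,0.1]$ and $0<\ell\le r$. The number $R$ of while-loop iterations executed by Algorithm U on input $(\ell,r,\delta,\varepsilon,\gamma)$ satisfies $$R\ \le\ \widetilde R:=22\log^2(r/\ell)+44\log(r/\ell)\log(1/\varepsilon)+66\log(1/\varepsilon).$$
   Context: Logarithms are natural. Algorithm U (input $\ell,r,\delta,\varepsilon,\gamma$; absolute constant $C$; pricing query at $p$ reveals only $\mathbf 1\{v\ge p\}$ for a fresh $v$ from the unknown distribution): Let $S_1=\{(1+\varepsilon)^k\ell: k\in\mathbb{N}_0,\ (1+\varepsilon)^k\ell\le r\}$, $S_{can}=\emptyset$, $i=1$. While $|S_i|\ge 20$: let $\ell_i=\min S_i$, $r_i=\max S_i$, $a_i=\min\{p\in S_i: p>\ell_i+0.2(r_i-\ell_i)\}$, $b_i=\min\{p\in S_i:p>\ell_i+0.5(r_i-\ell_i)\}$. Post $b_i$ for $C\log(\widetilde R/\delta)\gamma^{-1}$ queries and let $\widehat q(b_i)$ be the empirical purchase fraction. If $\widehat q(b_i)<0.75\gamma$, set $S_{i+1}=S_i\cap[\ell_i,b_i]$, $i\leftarrow i+1$, continue. Otherwise add $a_i,b_i$ to $S_{can}$; for $p\in\{a_i,b_i\}$ post $p$ for $C\log(\widetilde R/\delta)\gamma^{-1}\varepsilon^{-2}$ queries and set $\widehat{\mathrm{Rev}}(p)=p\cdot$(empirical purchase fraction). If $(1+\varepsilon)\widehat{\mathrm{Rev}}(a_i)<(1-\varepsilon)\widehat{\mathrm{Rev}}(b_i)$ set $S_{i+1}=S_i\cap[a_i,r_i]$,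 else $S_{i+1}=S_i\cap[\ell_i,b_i]$; $i\leftarrow i+1$. After the loop $R=i-1$, all of $S_{R+1}$ is added to $S_{can}$, revenues of $S_{can}$ are re-estimated with $C\log(\widetilde R/\delta)\gamma^{-1}\varepsilon^{-2}$ queries each, and the empirical maximizer is output. *)

theory Defs
  imports Complex_Main
begin

definition grid :: "real \<Rightarrow> real \<Rightarrow> real \<Rightarrow> real set" where
  "grid l r eps = {p. \<exists>k::nat. p = (1 + eps) ^ k * l \<and> p \<le> r}"

definition pt_a :: "real set \<Rightarrow> real" where
  "pt_a S = Min {p \<in> S. p > Min S + 0.2 * (Max S - Min S)}"

definition pt_b :: "real set \<Rightarrow> real" where
  "pt_b S = Min {p \<in> S. p > Min S + 0.5 * (Max S - Min S)}"

definition step_left :: "real set \<Rightarrow> real set" where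
  "step_left S = S \<inter> {Min S .. pt_b S}"

definition step_right :: "real set \<Rightarrow> real set" where
  "step_right S = S \<inter> {pt_a S .. Max S}"

text \<open>S is a possible trajectory of the sets S_1, S_2, ... of Algorithm U: whatever the
  (random) query outcomes, each executed iteration (|S_i| \<ge> 20) replaces S_i by one of the
  two updates.\<close>
definition alg_U_trajectory :: "real \<Rightarrow> real \<Rightarrow> real \<Rightarrow> (nat \<Rightarrow> real set) \<Rightarrow> bool" where
  "alg_U_trajectory l r eps S \<longleftrightarrow>
     S 1 = grid l r eps \<and>
     (\<forall>i\<ge>1. card (S i) \<ge> 20 \<longrightarrow> S (Suc i) \<in> {step_left (S i), step_right (S i)})"

definition R_tilde :: "real \<Rightarrow> real \<Rightarrow> real \<Rightarrow> real" where
  "R_tilde l r eps = 22 * (ln (r / l))^2 + 44 * ln (r / l) * ln (1 / eps) + 66 * ln (1 / eps)"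

end

theory Submission
  imports Defs
begin

text \<open>Every S_i is a contiguous block of the geometric grid. While a block has at least 20
  points, its span exceeds 19 eps times its minimum, hence 19 eps l. Each iteration shrinks the
  span by the factor 0.8: cutting at a_i obviously does, and cutting at b_i overshoots the
  midpoint by at most one grid step, of relative size eps, which is small against the span.
  Hence 19 eps l \<le> 0.8^(R-1) r, i.e. R \<le> 1 + 5 ln(r/l) + 5 ln(1/eps).\<close>

definition grid_segment :: "real \<Rightarrow> real \<Rightarrow> real \<Rightarrow> real set \<Rightarrow> bool" where
  "grid_segment l r eps S \<longleftrightarrow> finite S \<and> S \<noteq> {} \<and> S = grid l r eps \<inter> {Min S..Max S}"

lemma grid_ge:
  assumes "0 < eps" "0 < l" "p \<in> grid l r eps"
  shows "l \<le> p"
proof -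
  obtain k where "p = (1 + eps) ^ k * l" using assms(3) unfolding grid_def by auto
  moreover have "1 \<le> (1 + eps) ^ k" using assms(1) by (simp add: one_le_power)
  ultimately show ?thesis using assms(2) by (simp add: mult_le_cancel_right1)
qed

lemma finite_grid:
  assumes "0 < eps" "0 < l"
  shows "finite (grid l r eps)"
proof -
  have "grid l r eps \<subseteq> (\<lambda>k. (1 + eps) ^ k * l) ` {..nat \<lceil>r / (l * eps)\<rceil>}"
  proof
    fix p assume "p \<in> grid l r eps"
    then obtain k :: nat where k: "p = (1 + eps) ^ k * l" "p \<le> r" unfolding grid_def by auto
    have "1 + real k * eps \<le> (1 + eps) ^ k" using Bernoulli_inequality[of eps k] assms by simp
    then have "(1 + real k * eps) * l \<le> r" using k assms(2) by (meson mult_right_mono less_imp_le order_trans)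
    then have "real k \<le> r / (l * eps)" using assms by (simp add: field_simps)
    then have "k \<le> nat \<lceil>r / (l * eps)\<rceil>" by linarith
    then show "p \<in> (\<lambda>k. (1 + eps) ^ k * l) ` {..nat \<lceil>r / (l * eps)\<rceil>}" using k by auto
  qed
  then show ?thesis by (rule finite_subset) simp
qed

lemma grid_divide_mem:
  assumes "0 < eps" "0 < l" "p \<in> grid l r eps" "l < p"
  shows "p / (1 + eps) \<in> grid l r eps"
proof -
  obtain k where k: "p = (1 + eps) ^ k * l" "p \<le> r" using assms(3) unfolding grid_def by auto
  with assms(4) obtain j where "k = Suc j" by (cases k) auto
  then have "p / (1 + eps) = (1 + eps) ^ j * l" using k(1) assms(1) by simp
  moreover have "p / (1 + eps) \<le> p" using assms(1,2,4) by (simp add: field_simps)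
  then have "p / (1 + eps) \<le> r" using k(2) by simp
  ultimately show ?thesis unfolding grid_def by blast
qed

lemma grid_card_le_span:
  assumes "0 < eps" "0 < l" "A \<subseteq> grid l r eps" "finite A" "Suc k \<le> card A"
  shows "(1 + eps) ^ k * Min A \<le> Max A"
proof -
  let ?q = "1 + eps"
  have "A \<noteq> {}" using assms(5) by auto
  then have "Min A \<in> A" "Max A \<in> A" using assms(4) by simp_all
  then have "Min A \<in> grid l r eps" "Max A \<in> grid l r eps" using assms(3) by blast+
  then obtain a b where a: "Min A = ?q ^ a * l" and b: "Max A = ?q ^ b * l" unfolding grid_def by auto
  have "A \<subseteq> (\<lambda>k. ?q ^ k * l) ` {a..b}"
  proof
    fix p assume p: "p \<in> A"
    then obtain k where k: "p = ?q ^ k * l" using assms(3) unfolding grid_def by auto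
    have "Min A \<le> p" "p \<le> Max A" using p assms(4) by simp_all
    then have "?q ^ a \<le> ?q ^ k" "?q ^ k \<le> ?q ^ b" using a b k assms(2) by simp_all
    then have "k \<in> {a..b}" using assms(1) by (auto dest: power_le_imp_le_exp[rotated])
    then show "p \<in> (\<lambda>k. ?q ^ k * l) ` {a..b}" using k by auto
  qed
  then have "card A \<le> card {a..b}" by (meson card_image_le card_mono finite_atLeastAtMost finite_imageI order_trans)
  then have "?q ^ (a + k) \<le> ?q ^ b" using assms(1,5) by (intro power_increasing) auto
  then show ?thesis using a b assms(2) by (simp add: power_add mult_ac)
qed

lemma grid_segment_span_ge:
  assumes "0 < eps" "0 < l" "grid_segment l r eps S" "20 \<le> card S"
  shows "19 * eps * Min S \<le> Max S - Min S"
proof -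
  have fin: "finite S" and SG: "S \<subseteq> grid l r eps"
    using assms(3) unfolding grid_segment_def by blast+
  have "S \<noteq> {}" using assms(4) by auto
  then have "l \<le> Min S" using fin SG grid_ge[OF assms(1,2)] by auto
  then have "0 < Min S" using assms(2) by simp
  moreover have "1 + 19 * eps \<le> (1 + eps) ^ 19" using Bernoulli_inequality[of eps 19] assms(1) by simp
  ultimately have "(1 + 19 * eps) * Min S \<le> (1 + eps) ^ 19 * Min S" by (metis less_imp_le mult_right_mono)
  also have "\<dots> \<le> Max S" using grid_card_le_span[OF assms(1,2) SG fin] assms(4) by simp
  finally show ?thesis by (simp add: algebra_simps)
qed

lemma grid_segment_restrict:
  assumes "grid_segment l r eps S" "x \<in> S" "y \<in> S" "x \<le> y"
  shows "grid_segment l r eps (S \<inter> {x..y})" "Min (S \<inter> {x..y}) = x" "Max (S \<inter> {x..y}) = y"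
proof -
  have fin: "finite S" and S: "S = grid l r eps \<inter> {Min S..Max S}"
    using assms(1) unfolding grid_segment_def by blast+
  show min: "Min (S \<inter> {x..y}) = x" and max: "Max (S \<inter> {x..y}) = y"
    using assms(2-4) fin by (auto intro: Min_eqI Max_eqI)
  have "Min S \<le> x" "y \<le> Max S" using assms(2,3) fin by auto
  then have "S \<inter> {x..y} = grid l r eps \<inter> {x..y}" by (subst S) auto
  moreover have "finite (S \<inter> {x..y})" "S \<inter> {x..y} \<noteq> {}" using fin assms(2,4) by auto
  ultimately show "grid_segment l r eps (S \<inter> {x..y})"
    unfolding grid_segment_def min max by blast
qed

lemma Min_greater:
  assumes "finite S" "x \<in> S" "t < x"
  defines "c \<equiv> Min {p \<in> S. t < p}"
  shows "c \<in> S" "t < c" "\<And>p. p \<in> S \<Longrightarrow> t < p \<Longrightarrow> c \<le> p"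
proof -
  have fin: "finite {p \<in> S. t < p}" using assms(1) by simp
  moreover have "{p \<in> S. t < p} \<noteq> {}" using assms(2,3) by auto
  ultimately have "c \<in> {p \<in> S. t < p}" unfolding c_def by (rule Min_in)
  then show "c \<in> S" "t < c" by simp_all
  show "\<And>p. p \<in> S \<Longrightarrow> t < p \<Longrightarrow> c \<le> p" unfolding c_def using fin by simp
qed

lemma Min_less_Max:
  fixes S :: "'a::linorder set"
  assumes "finite S" "2 \<le> card S"
  shows "Min S < Max S"
proof (rule ccontr)
  assume "\<not> Min S < Max S"
  then have "x = Min S" if "x \<in> S" for x
    using Min_le[OF assms(1) that] Max_ge[OF assms(1) that] by (metis antisym not_less order_trans)
  then have "card S \<le> card {Min S}" by (intro card_mono) auto
  then show False using assms(2) by simp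
qed

lemma step_right_shrinks:
  assumes "grid_segment l r eps S" "Min S < Max S"
  shows "grid_segment l r eps (step_right S)"
    "Max (step_right S) - Min (step_right S) \<le> 0.8 * (Max S - Min S)"
proof -
  have fin: "finite S" and "S \<noteq> {}" using assms(1) unfolding grid_segment_def by blast+
  then have MaxS: "Max S \<in> S" by simp
  have "Min S + 0.2 * (Max S - Min S) < Max S" using assms(2) by (simp add: field_simps)
  note a = Min_greater[OF fin MaxS this, folded pt_a_def]
  have "pt_a S \<le> Max S" using fin a(1) by simp
  note seg = grid_segment_restrict[OF assms(1) a(1) MaxS this, folded step_right_def]
  show "grid_segment l r eps (step_right S)" by (fact seg(1))
  show "Max (step_right S) - Min (step_right S) \<le> 0.8 * (Max S - Min S)"
    using seg(2,3) a(2) by (auto simp: field_simps)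
qed

lemma step_left_shrinks:
  assumes "0 < eps" "eps \<le> 0.1" "0 < l" "grid_segment l r eps S" "20 \<le> card S"
  shows "grid_segment l r eps (step_left S)"
    "Max (step_left S) - Min (step_left S) \<le> 0.8 * (Max S - Min S)"
proof -
  define D where "D = Max S - Min S"
  let ?t = "Min S + 0.5 * D"
  have fin: "finite S" and "S \<noteq> {}" and S: "S = grid l r eps \<inter> {Min S..Max S}"
    using assms(4) unfolding grid_segment_def by blast+
  then have MinS: "Min S \<in> S" and MaxS: "Max S \<in> S" by simp_all
  have "l \<le> Min S" using MinS S grid_ge[OF assms(1,3)] by blast
  have span: "19 * eps * Min S \<le> D" using grid_segment_span_ge[OF assms(1,3-5)] by (simp add: D_def)
  moreover have "0 < 19 * eps * Min S" using assms(1,3) \<open>l \<le> Min S\<close> by simp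
  ultimately have "0 < D" by linarith
  then have "Min S \<le> ?t" "?t < Max S" by (simp_all add: D_def field_simps)
  note b = Min_greater[OF fin MaxS \<open>?t < Max S\<close>[unfolded D_def], folded pt_b_def D_def]
  \<comment> \<open>otherwise the grid point just below pt_b S would also lie above the midpoint\<close>
  have "pt_b S \<le> (1 + eps) * ?t"
  proof (rule ccontr)
    assume "\<not> ?thesis"
    then have above: "?t < pt_b S / (1 + eps)" using assms(1) by (simp add: field_simps)
    have "pt_b S \<in> grid l r eps" using b(1) S by blast
    moreover have "l < pt_b S" using b(2) \<open>l \<le> Min S\<close> \<open>Min S \<le> ?t\<close> by linarith
    ultimately have pred_grid: "pt_b S / (1 + eps) \<in> grid l r eps" by (rule grid_divide_mem[OF assms(1,3)])
    have pred_less: "pt_b S / (1 + eps) < pt_b S" using assms(1,3) \<open>l < pt_b S\<close> by (simp add: field_simps)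
    have "pt_b S \<le> Max S" using fin b(1) by simp
    moreover have "Min S < pt_b S / (1 + eps)" using \<open>Min S \<le> ?t\<close> above by (rule le_less_trans)
    ultimately have "pt_b S / (1 + eps) \<in> S" using pred_grid pred_less by (subst S) simp
    then show False using b(3) above pred_less by fastforce
  qed
  then have "pt_b S - Min S \<le> eps * Min S + D / 2 + eps * D / 2"
    by (simp add: algebra_simps add_divide_distrib)
  \<comment> \<open>the overshoot beyond the midpoint is at most eps * Min S + eps * D / 2 \<le> D / 19 + D / 20\<close>
  moreover have "eps * Min S \<le> D / 19" using span by simp
  moreover have "eps * D \<le> D / 10" using assms(2) \<open>0 < D\<close> by simp
  ultimately have "pt_b S - Min S \<le> 0.8 * D" using \<open>0 < D\<close> by linarith
  have "Min S \<le> pt_b S" using b(2) \<open>Min S \<le> ?t\<close> by linarith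
  note seg = grid_segment_restrict[OF assms(4) MinS b(1) this, folded step_left_def]
  show "grid_segment l r eps (step_left S)" by (fact seg(1))
  show "Max (step_left S) - Min (step_left S) \<le> 0.8 * (Max S - Min S)"
    using seg(2,3) \<open>pt_b S - Min S \<le> 0.8 * D\<close> by (simp add: D_def)
qed

lemma grid_segment_grid:
  assumes "0 < eps" "0 < l" "l \<le> r"
  shows "grid_segment l r eps (grid l r eps)" "Min (grid l r eps) = l" "Max (grid l r eps) \<le> r"
proof -
  have fin: "finite (grid l r eps)" using finite_grid[OF assms(1,2)] .
  have l: "l \<in> grid l r eps" using assms(3) unfolding grid_def by (auto intro: exI[of _ 0])
  show "Min (grid l r eps) = l" using fin l grid_ge[OF assms(1,2)] by (intro Min_eqI) auto
  have "Max (grid l r eps) \<in> grid l r eps" using fin l by (intro Max_in) auto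
  then show "Max (grid l r eps) \<le> r" unfolding grid_def by blast
  show "grid_segment l r eps (grid l r eps)" unfolding grid_segment_def using fin l by auto
qed

lemma trajectory_span_le:
  assumes "0 < eps" "eps \<le> 0.1" "0 < l" "l \<le> r"
    and "alg_U_trajectory l r eps S" "\<forall>i\<in>{1..n}. 20 \<le> card (S i)"
  shows "j \<le> n \<Longrightarrow> grid_segment l r eps (S (Suc j)) \<and>
    Max (S (Suc j)) - Min (S (Suc j)) \<le> 0.8 ^ j * (r - l)"
proof (induction j)
  case 0
  have "S 1 = grid l r eps" using assms(5) unfolding alg_U_trajectory_def by blast
  then show ?case using grid_segment_grid[OF assms(1,3,4)] by simp
next
  case (Suc j)
  let ?S = "S (Suc j)"
  have seg: "grid_segment l r eps ?S" and span: "Max ?S - Min ?S \<le> 0.8 ^ j * (r - l)"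
    using Suc by simp_all
  have card: "20 \<le> card ?S" using assms(6) Suc.prems by simp
  have "Min ?S < Max ?S" using seg card unfolding grid_segment_def by (intro Min_less_Max) auto
  have "S (Suc (Suc j)) \<in> {step_left ?S, step_right ?S}"
    using card assms(5) unfolding alg_U_trajectory_def by auto
  then have "grid_segment l r eps (S (Suc (Suc j))) \<and>
      Max (S (Suc (Suc j))) - Min (S (Suc (Suc j))) \<le> 0.8 * (Max ?S - Min ?S)"
    using step_left_shrinks[OF assms(1-3) seg card] step_right_shrinks[OF seg \<open>Min ?S < Max ?S\<close>] by auto
  then show ?case using span by auto
qed

lemma log_bound_of_shrinking:
  assumes "0 < eps" "0 < l" "19 * eps * l \<le> 0.8 ^ j * r"
  shows "real j \<le> 5 * (ln (r / l) + ln (1 / eps))"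
proof -
  have "0 < 19 * eps * l" using assms(1,2) by simp
  then have "0 < 0.8 ^ j * r" using assms(3) by linarith
  then have "0 < r" by (simp add: zero_less_mult_iff)
  have "ln 19 + ln eps + ln l = ln (19 * eps * l)" using assms(1,2) by (simp add: ln_mult)
  also have "\<dots> \<le> ln (0.8 ^ j * r)" using \<open>0 < 19 * eps * l\<close> \<open>0 < 0.8 ^ j * r\<close> assms(3) by simp
  also have "\<dots> = real j * ln 0.8 + ln r" using \<open>0 < r\<close> by (simp add: ln_mult ln_realpow)
  also have "\<dots> \<le> real j * (- 0.2) + ln r"
    using ln_le_minus_one[of "0.8::real"] by (intro add_right_mono mult_left_mono) auto
  finally have "ln 19 + ln eps + ln l \<le> ln r - real j / 5" by simp
  moreover have "0 \<le> ln (19::real)" by simp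
  ultimately have "real j \<le> 5 * (ln r - ln l - ln eps)" by argo
  then show ?thesis using assms(1,2) \<open>0 < r\<close> by (simp add: ln_div)
qed

lemma R_tilde_ge:
  assumes "0 < eps" "eps \<le> 0.1" "0 < l" "l \<le> r"
  shows "1 + 5 * (ln (r / l) + ln (1 / eps)) \<le> R_tilde l r eps"
proof -
  define L where "L = ln (r / l)"
  define E where "E = ln (1 / eps)"
  have "0 \<le> L" unfolding L_def using assms by simp
  have "ln eps \<le> eps - 1" using ln_le_minus_one assms(1) by simp
  then have "9 \<le> 10 * E" unfolding E_def using assms(1,2) by (simp add: ln_div)
  then have "L * 5 \<le> L * (44 * E)" using \<open>0 \<le> L\<close> by (intro mult_left_mono) simp_all
  then have "5 * L \<le> 44 * L * E" by (simp add: algebra_simps)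
  moreover have "0 \<le> 22 * L\<^sup>2" by simp
  ultimately show ?thesis unfolding R_tilde_def L_def[symmetric] E_def[symmetric]
    using \<open>9 \<le> 10 * E\<close> by argo
qed

theorem lemma3p3:
  fixes l r eps :: real and S :: "nat \<Rightarrow> real set" and n :: nat
  assumes "0 < eps" "eps \<le> 0.1" "0 < l" "l \<le> r"
    and "alg_U_trajectory l r eps S"
    and "\<forall>i\<in>{1..n}. card (S i) \<ge> 20"
  shows "real n \<le> R_tilde l r eps"
proof (cases n)
  case 0
  have "0 \<le> ln (r / l)" "0 \<le> ln (1 / eps)" using assms(1-4) by simp_all
  then show ?thesis using R_tilde_ge[OF assms(1-4)] 0 by simp
next
  case (Suc j)
  let ?T = "S (Suc j)"
  have "j \<le> n" "20 \<le> card ?T" using Suc assms(6) by auto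
  then have seg: "grid_segment l r eps ?T" and span: "Max ?T - Min ?T \<le> 0.8 ^ j * (r - l)"
    using trajectory_span_le[OF assms] by simp_all
  have "l \<le> Min ?T" using seg grid_ge[OF assms(1,3)] unfolding grid_segment_def by auto
  then have "19 * eps * l \<le> 19 * eps * Min ?T" using assms(1) by simp
  also have "\<dots> \<le> 0.8 ^ j * (r - l)" using grid_segment_span_ge[OF assms(1,3) seg \<open>20 \<le> card ?T\<close>] span by simp
  also have "\<dots> \<le> 0.8 ^ j * r" using assms(3) by simp
  finally have "real j \<le> 5 * (ln (r / l) + ln (1 / eps))" by (rule log_bound_of_shrinking[OF assms(1,3)])
  then show ?thesis using R_tilde_ge[OF assms(1-4)] Suc by simp
qed

end
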